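(* Let $U\in C^{3}(\mathbb{R}^{d})$ be a Morse function, $\boldsymbol{\ell}$ a $C^{1}$ vector field with $\nabla U\cdot\boldsymbol{\ell}\equiv0$, and $\boldsymbol{\sigma}$ a critical point of $U$ such that $\mathbb{H}=\nabla^{2}U(\boldsymbol{\sigma})$ has exactly one negative eigenvalue. Let $\mathbb{L}=D\boldsymbol{\ell}(\boldsymbol{\sigma})$, let $-\mu$ be the unique negative eigenvalue of $\mathbb{H}-\mathbb{L}^{\dagger}$, and $\boldsymbol{v}$ a unit eigenvector of $\mathbb{H}-\mathbb{L}^{\dagger}$ for $-\mu$. Then: (1) $\mathbb{H}+2\mu\,\boldsymbol{v}\otimes\boldsymbol{v}$ is symmetric positive definite and $\det(\mathbb{H}+2\mu\,\boldsymbol{v}\otimes\boldsymbol{v})=-\det\mathbb{H}$; (2) $\mathbb{H}+\mu\,\boldsymbol{v}\otimes\boldsymbol{v}$ is symmetric non-negative definite with $\det(\mathbb{H}+\mu\,\boldsymbol{v}\otimes\boldsymbol{v})=0$, and its null space is one-dimensional, spanned by $\mathbb{H}^{-1}\boldsymbol{v}$.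
   Context: $\mathbb{L}^{\dagger}$ is the transpose; $(\boldsymbol{u}\otimes\boldsymbol{w})_{ij}=u_{i}w_{j}$. Under these hypotheses $\mathbb{H}-\mathbb{L}^{\dagger}$ is similar to $\mathbb{H}+\mathbb{L}$, which is invertible with exactly one negative eigenvalue, so $\mu>0$ is well defined. *)

theory Defs
  imports "HOL-Analysis.Analysis" "HOL-Computational_Algebra.Polynomial"
begin

text \<open>Continuous differentiability on all of R^n: differentiable everywhere and
  every partial derivative is continuous (equivalent to the Frechet derivative being continuous).\<close>
definition C1_fun :: "(real^'n \<Rightarrow> 'b::real_normed_vector) \<Rightarrow> bool" where
  "C1_fun f \<longleftrightarrow> (\<forall>x. f differentiable (at x)) \<and>
     (\<forall>i. continuous_on UNIV (\<lambda>x. frechet_derivative f (at x) (axis i 1)))"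

definition grad :: "(real^'n \<Rightarrow> real) \<Rightarrow> real^'n \<Rightarrow> real^'n" where
  "grad U x = (\<chi> i. frechet_derivative U (at x) (axis i 1))"

definition hess :: "(real^'n \<Rightarrow> real) \<Rightarrow> real^'n \<Rightarrow> real^'n^'n" where
  "hess U x = jacobian (grad U) (at x)"

definition C3_fun :: "(real^'n \<Rightarrow> real) \<Rightarrow> bool" where
  "C3_fun U \<longleftrightarrow> C1_fun U \<and> C1_fun (grad U) \<and> C1_fun (hess U)"

definition morse :: "(real^'n \<Rightarrow> real) \<Rightarrow> bool" where
  "morse U \<longleftrightarrow> (\<forall>x. grad U x = 0 \<longrightarrow> det (hess U x) \<noteq> 0)"

definition charpoly :: "real^'n^'n \<Rightarrow> real poly" where
  "charpoly A = det (\<chi> i j. (if i = j then [:0, 1:] else 0) - [:A $ i $ j:])"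

definition num_neg_eigenvalues :: "real^'n^'n \<Rightarrow> nat" where
  "num_neg_eigenvalues A =
     (\<Sum>e\<in>{e. e < 0 \<and> poly (charpoly A) e = 0}. order e (charpoly A))"

definition outer :: "real^'n \<Rightarrow> real^'n \<Rightarrow> real^'n^'n" where
  "outer u w = (\<chi> i j. u $ i * w $ j)"

end

theory Submission
  imports Defs
begin

text \<open>Write \<open>H\<close> for the Hessian, \<open>L\<close> for the Jacobian of \<open>\<ell>\<close> at \<open>\<sigma>\<close>, and \<open>w = H\<^sup>-\<^sup>1 v\<close>.
  Differentiating \<open>\<nabla>U \<bullet> \<ell> = 0\<close> twice at \<open>\<sigma>\<close> gives \<open>(H d) \<bullet> (L d) = 0\<close>, and pairing the
  eigenvalue equation for \<open>H - L\<^sup>T\<close> with \<open>w\<close> then yields \<open>v \<bullet> w = -1/\<mu>\<close>, so \<open>w \<bullet> H w < 0\<close>.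
  As \<open>H\<close> has a single negative eigenvalue, it is positive definite on the \<open>H\<close>-orthogonal
  complement of \<open>w\<close>. Completing the square, \<open>x \<bullet> (H + \<mu> v v\<^sup>T) x = y \<bullet> H y\<close> with
  \<open>y = x + \<mu> (v \<bullet> x) w\<close> in that complement, which gives semidefiniteness, the kernel
  \<open>span {w}\<close> and, adding \<open>\<mu> (v \<bullet> x)\<^sup>2\<close> once more, definiteness. Finally
  \<open>det (H + c v v\<^sup>T)\<close> is affine in \<open>c\<close> and vanishes at \<open>c = \<mu>\<close>, so it equals \<open>-det H\<close> at
  \<open>c = 2\<mu>\<close>.\<close>

section \<open>Determinants\<close>

lemma cramer_lemma_comm_ring:
  fixes A :: "'a::comm_ring_1^'n^'n"
  shows "det (\<chi> i j. if j = k then (A *v x)$i else A$i$j) = x$k * det A"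
proof -
  have replace: "det (\<chi> j. if j = k then column m A else column j A) = (if m = k then det A else 0)"
    for m
  proof (cases "m = k")
    case True
    then have "(\<chi> j. if j = k then column m A else column j A) = transpose A"
      by (simp add: vec_eq_iff transpose_def column_def)
    then show ?thesis using True by simp
  next
    case False
    then show ?thesis
      by (simp add: det_identical_rows[of k m] row_def)
  qed
  have "(\<chi> i j. if j = k then (A *v x)$i else A$i$j)
      = transpose (\<chi> j. if j = k then (\<Sum>m\<in>UNIV. x$m *s column m A) else column j A)"
    by (simp add: vec_eq_iff transpose_def column_def matrix_vector_mult_def mult.commute)
  then have "det (\<chi> i j. if j = k then (A *v x)$i else A$i$j)
      = (\<Sum>m\<in>UNIV. x$m * det (\<chi> j. if j = k then column m A else column j A))"
    by (simp add: det_linear_row_sum det_row_mul)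
  also have "\<dots> = x$k * det A"
    by (simp add: replace if_distrib cong: if_cong)
  finally show ?thesis .
qed

lemma det_eigenvector_column:
  fixes A :: "'a::comm_ring_1^'n^'n"
  assumes "A *v x = c *s x"
  shows "x$k * det A = c * det (\<chi> i j. if j = k then x$i else A$i$j)"
proof -
  have "x$k * det A = det (transpose (\<chi> j. if j = k then c *s x else column j A))"
    unfolding cramer_lemma_comm_ring[symmetric] assms
    by (rule arg_cong[where f = det]) (simp add: vec_eq_iff transpose_def column_def)
  also have "\<dots> = c * det (transpose (\<chi> j. if j = k then x else column j A))"
    by (simp add: det_row_mul)
  also have "transpose (\<chi> j. if j = k then x else column j A) = (\<chi> i j. if j = k then x$i else A$i$j)"
    by (simp add: vec_eq_iff transpose_def column_def)
  finally show ?thesis .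
qed

lemma det_add_multiples_of_row:
  fixes A :: "'a::comm_ring_1^'n^'n"
  assumes "finite S" "k \<notin> S"
  shows "det (\<chi> i. if i = k then b else if i \<in> S then row i A + a$i *s b else row i A)
       = det (\<chi> i. if i = k then b else row i A)"
  using assms
proof (induction S rule: finite_induct)
  case empty
  show ?case by (rule arg_cong[where f = det]) (simp add: vec_eq_iff)
next
  case (insert j S)
  define B where "B = (\<chi> i. if i = k then b else if i \<in> S then row i A + a$i *s b else row i A)"
  have "j \<noteq> k" using insert by auto
  then have "det (\<chi> i. if i = j then row j B + a$j *s row k B else row i B) = det B"
    by (rule det_row_operation)
  moreover have "(\<chi> i. if i = j then row j B + a$j *s row k B else row i B)
     = (\<chi> i. if i = k then b else if i \<in> insert j S then row i A + a$i *s b else row i A)"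
    using insert \<open>j \<noteq> k\<close> unfolding B_def by (auto simp: vec_eq_iff row_def)
  ultimately show ?case using insert B_def by simp
qed

lemma det_add_rank_one_rows_on:
  fixes A :: "'a::comm_ring_1^'n^'n"
  assumes "finite S"
  shows "det (\<chi> i. if i \<in> S then row i A + a$i *s b else row i A)
       = det A + (\<Sum>k\<in>S. a$k * det (\<chi> i. if i = k then b else row i A))"
  using assms
proof (induction S rule: finite_induct)
  case empty
  have "(\<chi> i. row i A) = A" by (simp add: vec_eq_iff row_def)
  then show ?case by simp
next
  case (insert k S)
  define R where "R = (\<chi> i. if i \<in> S then row i A + a$i *s b else row i A)"
  have "(\<chi> i. if i \<in> insert k S then row i A + a$i *s b else row i A)
      = (\<chi> i. if i = k then row k A + a$k *s b else row i R)"
    unfolding R_def by (auto simp: vec_eq_iff row_def)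
  also have "det \<dots> = det (\<chi> i. if i = k then row k A else row i R)
      + a$k * det (\<chi> i. if i = k then b else row i R)"
    by (simp add: det_row_add det_row_mul)
  also have "(\<chi> i. if i = k then row k A else row i R) = R"
    using insert unfolding R_def by (auto simp: vec_eq_iff row_def)
  also have "(\<chi> i. if i = k then b else row i R)
      = (\<chi> i. if i = k then b else if i \<in> S then row i A + a$i *s b else row i A)"
    unfolding R_def by (auto simp: vec_eq_iff row_def)
  also have "det \<dots> = det (\<chi> i. if i = k then b else row i A)"
    using insert by (intro det_add_multiples_of_row) auto
  finally show ?case using insert R_def by (simp add: algebra_simps)
qed

lemma det_add_outer:
  fixes A :: "real^'n^'n"
  shows "det (A + outer a b) = det A + (\<Sum>k\<in>UNIV. a$k * det (\<chi> i. if i = k then b else row i A))"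
proof -
  have "A + outer a b = (\<chi> i. if i \<in> UNIV then row i A + a$i *s b else row i A)"
    by (simp add: vec_eq_iff outer_def row_def)
  then show ?thesis using det_add_rank_one_rows_on[of UNIV A a b] by simp
qed

lemma det_add_outer_affine:
  fixes A :: "real^'n^'n"
  shows "\<exists>K. \<forall>c. det (A + c *\<^sub>R outer v v) = det A + c * K"
proof (intro exI allI)
  fix c
  have "c *\<^sub>R outer v v = outer (c *\<^sub>R v) v" by (simp add: vec_eq_iff outer_def)
  then show "det (A + c *\<^sub>R outer v v)
      = det A + c * (\<Sum>k\<in>UNIV. v$k * det (\<chi> i. if i = k then v else row i A))"
    by (simp add: det_add_outer sum_distrib_left mult.assoc)
qed

lemma matrix_inv_mult_vector:
  fixes A :: "'a::field^'n^'n"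
  assumes "det A \<noteq> 0"
  shows "A *v (matrix_inv A *v x) = x" "matrix_inv A *v (A *v x) = x"
proof -
  have "A ** matrix_inv A = mat 1 \<and> matrix_inv A ** A = mat 1"
    using someI_ex[OF assms[folded invertible_det_nz, unfolded invertible_def]]
    unfolding matrix_inv_def .
  then show "A *v (matrix_inv A *v x) = x" "matrix_inv A *v (A *v x) = x"
    by (simp_all add: matrix_vector_mul_assoc)
qed

lemma det_nonzero_kernel_zero:
  fixes A :: "'a::field^'n^'n"
  assumes "det A \<noteq> 0" "A *v x = 0"
  shows "x = 0"
  using matrix_inv_mult_vector(2)[OF assms(1), of x] assms(2) by simp

lemma transpose_add: "transpose (A + B) = transpose A + transpose (B :: 'a::plus^'n^'m)"
  by (simp add: transpose_def vec_eq_iff)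

lemma transpose_diff: "transpose (A - B) = transpose A - transpose (B :: 'a::minus^'n^'m)"
  by (simp add: transpose_def vec_eq_iff)

lemma outer_mult_vector: "outer u w *v x = (w \<bullet> x) *\<^sub>R u"
  by (simp add: vec_eq_iff outer_def matrix_vector_mult_def inner_vec_def sum_distrib_left
      algebra_simps)

lemma transpose_outer: "transpose (outer u w) = outer w u"
  by (simp add: vec_eq_iff transpose_def outer_def mult.commute)

section \<open>Eigenvalues and the characteristic polynomial\<close>

definition charmat :: "real^'n^'n \<Rightarrow> real poly^'n^'n" where
  "charmat A = (\<chi> i j. (if i = j then [:0, 1:] else 0) - [:A $ i $ j:])"

definition const_poly_vec :: "real^'n \<Rightarrow> real poly^'n" where
  "const_poly_vec x = (\<chi> i. [:x $ i:])"

lemma const_poly_vec_nth [simp]: "const_poly_vec x $ i = [:x $ i:]"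
  by (simp add: const_poly_vec_def)

lemma charpoly_eq_det_charmat: "charpoly A = det (charmat A)"
  by (simp add: charpoly_def charmat_def)

lemma charmat_mult_eigenvector:
  assumes "A *v e = c *\<^sub>R e"
  shows "charmat A *v const_poly_vec e = [:-c, 1:] *s const_poly_vec e"
proof -
  have "(charmat A *v const_poly_vec e) $ i = [:-c, 1:] * [:e$i:]" for i
  proof -
    have "(charmat A *v const_poly_vec e) $ i
        = (\<Sum>j\<in>UNIV. smult (e$j) ((if i = j then [:0, 1:] else 0) - [:A$i$j:]))"
      by (simp add: charmat_def const_poly_vec_def matrix_vector_mult_def)
    also have "\<dots> = (\<Sum>j\<in>UNIV. smult (e$j) (if i = j then [:0, 1:] else 0))
        - (\<Sum>j\<in>UNIV. [:A$i$j * e$j:])"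
      by (simp add: smult_diff_right sum_subtractf mult.commute)
    also have "(\<Sum>j\<in>UNIV. smult (e$j) (if i = j then [:0, 1:] else 0)) = [:0, 1:] * [:e$i:]"
      by (simp add: if_distrib cong: if_cong)
    also have "(\<Sum>j\<in>UNIV. [:A$i$j * e$j:]) = [:(A *v e)$i:]"
      by (simp add: sum_to_poly matrix_vector_mult_def)
    finally show ?thesis using assms by simp
  qed
  then show ?thesis by (simp add: vec_eq_iff const_poly_vec_def)
qed

lemma linear_factor_dvd_charpoly:
  assumes "A *v e = c *\<^sub>R e" "e \<noteq> 0"
  shows "[:-c, 1:] dvd charpoly A"
proof -
  obtain k where k: "e$k \<noteq> 0" using assms(2) by (auto simp: vec_eq_iff)
  have "[:e$k:] * charpoly A
      = [:-c, 1:] * det (\<chi> i j. if j = k then const_poly_vec e $ i else charmat A $ i $ j)"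
    unfolding charpoly_eq_det_charmat const_poly_vec_nth[symmetric]
    by (rule det_eigenvector_column[OF charmat_mult_eigenvector[OF assms(1)]])
  then have "[:-c, 1:] dvd [:e$k:] * charpoly A" by (simp only: dvd_triv_left)
  then show ?thesis using k by (simp add: dvd_smult_cancel)
qed

text \<open>Cramer's rule trades a column of the characteristic matrix for \<open>e\<close>; the second
  eigenvector, corrected to vanish in that column, is an eigenvector of the new matrix and
  yields the second factor.\<close>
lemma linear_factor_square_dvd_charpoly:
  assumes "A *v e = c *\<^sub>R e" "e \<noteq> 0" "A *v f = c *\<^sub>R f" "\<And>a. f \<noteq> a *\<^sub>R e"
  shows "[:-c, 1:]^2 dvd charpoly A"
proof -
  obtain k where k: "e$k \<noteq> 0" using assms(2) by (auto simp: vec_eq_iff)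
  define g where "g = f - (f$k / e$k) *\<^sub>R e"
  have "g$k = 0" using k by (simp add: g_def)
  obtain m where m: "g$m \<noteq> 0" using assms(4)[of "f$k / e$k"] by (auto simp: g_def vec_eq_iff)
  have "A *v g = c *\<^sub>R g"
    using assms(1,3) by (simp add: g_def scaleR_matrix_vector_assoc algebra_simps)
  define N where "N = (\<chi> i j. if j = k then const_poly_vec e $ i else charmat A $ i $ j)"
  have N: "[:e$k:] * charpoly A = [:-c, 1:] * det N"
    unfolding charpoly_eq_det_charmat const_poly_vec_nth[symmetric] N_def
    by (rule det_eigenvector_column[OF charmat_mult_eigenvector[OF assms(1)]])
  have "N *v const_poly_vec g = charmat A *v const_poly_vec g"
    using \<open>g$k = 0\<close> by (auto simp: vec_eq_iff matrix_vector_mult_def N_def intro!: sum.cong)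
  also have "\<dots> = [:-c, 1:] *s const_poly_vec g"
    by (rule charmat_mult_eigenvector) fact
  finally have "[:g$m:] * det N
      = [:-c, 1:] * det (\<chi> i j. if j = m then const_poly_vec g $ i else N $ i $ j)"
    unfolding const_poly_vec_nth[symmetric] by (rule det_eigenvector_column)
  with N have "[:g$m:] * ([:e$k:] * charpoly A)
      = [:-c, 1:]^2 * det (\<chi> i j. if j = m then const_poly_vec g $ i else N $ i $ j)"
    by (simp only: power2_eq_square mult.assoc mult.left_commute[of "[:g$m:]"])
  then have "[:-c, 1:]^2 dvd [:g$m:] * ([:e$k:] * charpoly A)" by (simp only: dvd_triv_left)
  then show ?thesis using k m by (simp add: dvd_smult_cancel)
qed

text \<open>Stated as \<open>\<noteq> 1\<close> rather than \<open>\<ge> 2\<close> to avoid proving \<open>charpoly A \<noteq> 0\<close>: for the zero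
  polynomial the defining sum would range over an infinite set and be \<open>0\<close>.\<close>
lemma num_neg_eigenvalues_ne_one:
  assumes "A *v e1 = l1 *\<^sub>R e1" "A *v e2 = l2 *\<^sub>R e2" "e1 \<noteq> 0" "\<And>c. e2 \<noteq> c *\<^sub>R e1"
    and "l1 < 0" "l2 < 0"
  shows "num_neg_eigenvalues A \<noteq> 1"
proof
  assume one: "num_neg_eigenvalues A = 1"
  define p where "p = charpoly A"
  define R where "R = {e. e < 0 \<and> poly p e = 0}"
  have sum_R: "(\<Sum>e\<in>R. order e p) = 1" using one unfolding num_neg_eigenvalues_def p_def R_def .
  have "p \<noteq> 0"
  proof
    assume "p = 0"
    then have "R = {..<0}" by (auto simp: R_def)
    then show False using sum_R infinite_Iio[of "0::real"] by simp
  qed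
  then have "finite R" unfolding R_def by (rule rev_finite_subset[OF poly_roots_finite]) auto
  have "e2 \<noteq> 0" using assms(4)[of 0] by simp
  have dvd1: "[:-l1, 1:] dvd p" unfolding p_def by (rule linear_factor_dvd_charpoly) fact+
  have dvd2: "[:-l2, 1:] dvd p" unfolding p_def by (rule linear_factor_dvd_charpoly) fact+
  have "l1 \<in> R" "l2 \<in> R" using dvd1 dvd2 assms(5,6) by (simp_all add: R_def poly_eq_0_iff_dvd)
  show False
  proof (cases "l1 = l2")
    case True
    have "[:-l1, 1:]^2 dvd p" unfolding p_def
      using assms True by (intro linear_factor_square_dvd_charpoly[where f = e2]) auto
    then have "2 \<le> order l1 p" using \<open>p \<noteq> 0\<close> order_divides by blast
    moreover have "order l1 p \<le> (\<Sum>e\<in>R. order e p)"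
      using \<open>finite R\<close> \<open>l1 \<in> R\<close> by (intro member_le_sum) auto
    ultimately show False using sum_R by simp
  next
    case False
    have "1 \<le> order l1 p" "1 \<le> order l2 p"
      using dvd1 dvd2 \<open>p \<noteq> 0\<close> order_divides[of _ 1 p] by simp_all
    moreover have "order l1 p + order l2 p \<le> (\<Sum>e\<in>R. order e p)"
      using \<open>finite R\<close> \<open>l1 \<in> R\<close> \<open>l2 \<in> R\<close> False sum_mono2[of R "{l1, l2}" "\<lambda>e. order e p"]
      by simp
    ultimately show False using sum_R by simp
  qed
qed

section \<open>Quadratic forms\<close>

lemma inner_matrix_symmetric:
  fixes A :: "real^'n^'n"
  assumes "transpose A = A"
  shows "x \<bullet> (A *v y) = y \<bullet> (A *v x)"
  by (metis assms dot_lmul_matrix inner_commute transpose_matrix_vector)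

lemma quadratic_form_add:
  fixes A :: "real^'n^'n"
  assumes "transpose A = A"
  shows "(x + y) \<bullet> (A *v (x + y)) = x \<bullet> (A *v x) + 2 * (y \<bullet> (A *v x)) + y \<bullet> (A *v y)"
  using inner_matrix_symmetric[OF assms, of x y]
  by (simp add: matrix_vector_right_distrib inner_add_left inner_add_right)

lemma quadratic_form_scale:
  fixes A :: "real^'n^'n"
  shows "(c *\<^sub>R x) \<bullet> (A *v (c *\<^sub>R x)) = c^2 * (x \<bullet> (A *v x))"
  by (simp add: matrix_vector_mult_scaleR power2_eq_square)

lemma linear_coeff_eq_0_if_nonneg:
  fixes a b :: real
  assumes "\<And>t. 0 \<le> a * t + b * t^2"
  shows "a = 0"
proof (rule ccontr)
  assume "a \<noteq> 0"
  define k where "k = \<bar>b\<bar> + 1"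
  have "k > 0" "b < k" unfolding k_def by auto
  have "a * (- a / k) + b * (- a / k)^2 = a^2 * (b - k) / k^2"
    using \<open>k > 0\<close> by (simp add: field_simps power2_eq_square)
  also have "\<dots> < 0"
    using \<open>a \<noteq> 0\<close> \<open>k > 0\<close> \<open>b < k\<close> by (intro divide_neg_pos mult_pos_neg) auto
  finally show False using assms[of "- a / k"] by simp
qed

lemma quadratic_form_nonneg_zero_orthogonal:
  fixes A :: "real^'n^'n"
  assumes "transpose A = A" "subspace S" "e \<in> S" "e \<bullet> (A *v e) = 0"
    and "\<And>x. x \<in> S \<Longrightarrow> 0 \<le> x \<bullet> (A *v x)" and "d \<in> S"
  shows "d \<bullet> (A *v e) = 0"
proof -
  have "0 \<le> (2 * (d \<bullet> (A *v e))) * t + (d \<bullet> (A *v d)) * t^2" for t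
  proof -
    have "e + t *\<^sub>R d \<in> S" using assms(2,3,6) by (simp add: subspace_add subspace_scale)
    then have "0 \<le> (e + t *\<^sub>R d) \<bullet> (A *v (e + t *\<^sub>R d))" by (rule assms(5))
    also have "\<dots> = (2 * (d \<bullet> (A *v e))) * t + (d \<bullet> (A *v d)) * t^2"
      unfolding quadratic_form_add[OF assms(1)] quadratic_form_scale assms(4)
      by (simp add: scaleR_matrix_vector_assoc[symmetric] algebra_simps)
    finally show ?thesis .
  qed
  then show ?thesis using linear_coeff_eq_0_if_nonneg by fastforce
qed

text \<open>For \<open>u = 0\<close> the constraint is void and \<open>e\<close> minimises the Rayleigh quotient globally.\<close>
lemma exists_rayleigh_eigenvector:
  fixes A :: "real^'n^'n"
  assumes sym: "transpose A = A" and "A *v u = c *\<^sub>R u" and "x0 \<noteq> 0" "x0 \<bullet> u = 0"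
  obtains e l where "norm e = 1" "e \<bullet> u = 0" "A *v e = l *\<^sub>R e"
    "\<And>x. x \<bullet> u = 0 \<Longrightarrow> l * (norm x)^2 \<le> x \<bullet> (A *v x)"
proof -
  define S where "S = {x. u \<bullet> x = 0}"
  have "subspace S" unfolding S_def by (rule subspace_hyperplane)
  have "compact (sphere 0 1 \<inter> S)"
    unfolding S_def by (intro compact_Int_closed compact_sphere closed_hyperplane)
  moreover have "x0 /\<^sub>R norm x0 \<in> sphere 0 1 \<inter> S"
    using assms(3,4) by (simp add: S_def inner_commute)
  moreover have "continuous_on (sphere 0 1 \<inter> S) (\<lambda>x. x \<bullet> (A *v x))"
    by (intro continuous_intros)
  ultimately obtain e where e: "e \<in> sphere 0 1 \<inter> S"
    and min: "\<And>x. x \<in> sphere 0 1 \<inter> S \<Longrightarrow> e \<bullet> (A *v e) \<le> x \<bullet> (A *v x)"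
    using continuous_attains_inf[of "sphere 0 1 \<inter> S"] by blast
  define l where "l = e \<bullet> (A *v e)"
  have bound: "l * (norm x)^2 \<le> x \<bullet> (A *v x)" if "x \<in> S" for x
  proof (cases "x = 0")
    case False
    have "l \<le> (x /\<^sub>R norm x) \<bullet> (A *v (x /\<^sub>R norm x))"
      unfolding l_def using False that \<open>subspace S\<close> by (intro min) (simp add: subspace_scale)
    also have "\<dots> = x \<bullet> (A *v x) / (norm x)^2"
      unfolding quadratic_form_scale by (simp add: power_inverse divide_inverse_commute)
    finally show ?thesis using False by (simp add: field_simps)
  qed simp
  define B where "B = A - l *\<^sub>R mat 1"
  have B: "B *v x = A *v x - l *\<^sub>R x" for x
    by (simp add: B_def matrix_vector_mult_diff_rdistrib scaleR_matrix_vector_assoc[symmetric])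
  have "transpose B = B" using sym by (simp add: B_def transpose_diff transpose_scalar)
  have B_quadratic: "x \<bullet> (B *v x) = x \<bullet> (A *v x) - l * (norm x)^2" for x
    by (simp add: B inner_diff_right power2_norm_eq_inner)
  have orth: "d \<bullet> (B *v e) = 0" if "d \<in> S" for d
  proof (rule quadratic_form_nonneg_zero_orthogonal[OF \<open>transpose B = B\<close> \<open>subspace S\<close> _ _ _ that])
    show "e \<in> S" using e by simp
    show "e \<bullet> (B *v e) = 0" using e by (simp add: B_quadratic l_def)
    show "0 \<le> x \<bullet> (B *v x)" if "x \<in> S" for x using bound[OF that] by (simp add: B_quadratic)
  qed
  have "u \<bullet> (B *v e) = (c - l) * (e \<bullet> u)"
    using inner_matrix_symmetric[OF \<open>transpose B = B\<close>, of u e] assms(2)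
    by (simp add: B algebra_simps)
  then have "B *v e \<in> S" using e by (simp add: S_def inner_commute)
  then have "B *v e = 0" using orth inner_eq_zero_iff by blast
  then show ?thesis
    using e bound by (intro that[of e l]) (auto simp: B S_def inner_commute)
qed

text \<open>Sylvester's law of inertia in the form needed here: with a single negative eigenvalue,
  the form cannot be nonpositive on a plane, since minimising the Rayleigh quotient twice would
  produce two independent eigenvectors with negative eigenvalues.\<close>
lemma quadratic_form_pos_on_orthogonal_of_negative:
  fixes A :: "real^'n^'n"
  assumes sym: "transpose A = A" and "det A \<noteq> 0" and "num_neg_eigenvalues A = 1"
    and w: "w \<bullet> (A *v w) < 0" and "y \<noteq> 0" and yw: "y \<bullet> (A *v w) = 0"
  shows "y \<bullet> (A *v y) > 0"
proof (rule ccontr)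
  assume "\<not> ?thesis"
  then have "y \<bullet> (A *v y) \<le> 0" by simp
  have plane_nonpos: "(a *\<^sub>R w + b *\<^sub>R y) \<bullet> (A *v (a *\<^sub>R w + b *\<^sub>R y)) \<le> 0" for a b
  proof -
    have "(a *\<^sub>R w + b *\<^sub>R y) \<bullet> (A *v (a *\<^sub>R w + b *\<^sub>R y))
        = a^2 * (w \<bullet> (A *v w)) + b^2 * (y \<bullet> (A *v y))"
      unfolding quadratic_form_add[OF sym] quadratic_form_scale using yw
      by (simp add: matrix_vector_mult_scaleR)
    also have "\<dots> \<le> 0"
      using w \<open>y \<bullet> (A *v y) \<le> 0\<close> by (intro add_nonpos_nonpos mult_nonneg_nonpos) auto
    finally show ?thesis .
  qed
  have indep: "a = 0 \<and> b = 0" if "a *\<^sub>R w + b *\<^sub>R y = 0" for a b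
  proof -
    have "a * (w \<bullet> (A *v w)) = (a *\<^sub>R w + b *\<^sub>R y) \<bullet> (A *v w)"
      using yw by (simp add: inner_add_left)
    then have "a = 0" using that w by simp
    then show ?thesis using that \<open>y \<noteq> 0\<close> by simp
  qed
  have "w \<noteq> 0" using w by auto
  obtain e1 l1 where e1: "norm e1 = 1" "A *v e1 = l1 *\<^sub>R e1"
    and min1: "\<And>x. l1 * (norm x)^2 \<le> x \<bullet> (A *v x)"
    using exists_rayleigh_eigenvector[OF sym, of 0 0 w] \<open>w \<noteq> 0\<close> by auto
  have "l1 * (norm w)^2 < 0" using min1[of w] w by simp
  then have "l1 < 0" by (simp add: mult_less_0_iff)
  obtain a b where ab: "\<not> (a = 0 \<and> b = 0)" "(a *\<^sub>R w + b *\<^sub>R y) \<bullet> e1 = 0"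
  proof (cases "w \<bullet> e1 = 0")
    case True
    then show ?thesis using that[of 1 0] by simp
  next
    case False
    then show ?thesis using that[of "y \<bullet> e1" "- (w \<bullet> e1)"] by (simp add: inner_diff_left)
  qed
  define z where "z = a *\<^sub>R w + b *\<^sub>R y"
  have "z \<noteq> 0" using indep ab by (auto simp: z_def)
  obtain e2 l2 where e2: "norm e2 = 1" "e2 \<bullet> e1 = 0" "A *v e2 = l2 *\<^sub>R e2"
    and min2: "\<And>x. x \<bullet> e1 = 0 \<Longrightarrow> l2 * (norm x)^2 \<le> x \<bullet> (A *v x)"
    using exists_rayleigh_eigenvector[OF sym e1(2) \<open>z \<noteq> 0\<close>] ab by (auto simp: z_def)
  have "l2 * (norm z)^2 \<le> 0"
    using min2[of z] plane_nonpos[of a b] ab by (simp add: z_def)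
  then have "l2 \<le> 0" using \<open>z \<noteq> 0\<close> by (simp add: mult_le_0_iff)
  moreover have "l2 \<noteq> 0"
    using det_nonzero_kernel_zero[OF \<open>det A \<noteq> 0\<close>, of e2] e2 by auto
  moreover have "e2 \<noteq> c *\<^sub>R e1" for c
  proof
    assume "e2 = c *\<^sub>R e1"
    then have "c = 0" using e1 e2 by (simp add: dot_square_norm)
    then show False using \<open>e2 = c *\<^sub>R e1\<close> e2 by simp
  qed
  ultimately have "num_neg_eigenvalues A \<noteq> 1"
    using e1 e2 \<open>l1 < 0\<close> by (intro num_neg_eigenvalues_ne_one[of A e1 l1 e2 l2]) auto
  then show False using \<open>num_neg_eigenvalues A = 1\<close> by contradiction
qed

lemma quadratic_form_add_outer:
  "x \<bullet> ((A + c *\<^sub>R outer v v) *v x) = x \<bullet> (A *v x) + c * (v \<bullet> x)^2"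
  by (simp add: matrix_vector_mult_add_rdistrib outer_mult_vector inner_add_right inner_commute
      power2_eq_square flip: scaleR_matrix_vector_assoc)

section \<open>Second derivatives\<close>

lemma grad_nth: "grad U x $ j = frechet_derivative U (at x) (axis j 1)"
  by (simp add: grad_def)

lemma has_real_derivative_along_line:
  fixes U :: "real^'n \<Rightarrow> real"
  assumes "U differentiable (at (a + t *\<^sub>R d))"
  shows "((\<lambda>s. U (a + s *\<^sub>R d)) has_real_derivative frechet_derivative U (at (a + t *\<^sub>R d)) d) (at t)"
proof -
  let ?U' = "frechet_derivative U (at (a + t *\<^sub>R d))"
  have "(U has_derivative ?U') (at (a + t *\<^sub>R d))"
    using assms frechet_derivative_works by blast
  moreover have "((\<lambda>s. a + s *\<^sub>R d) has_derivative (\<lambda>s. s *\<^sub>R d)) (at t)"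
    by (auto intro!: derivative_eq_intros)
  ultimately have "((\<lambda>s. U (a + s *\<^sub>R d)) has_derivative (\<lambda>s. ?U' (s *\<^sub>R d))) (at t)"
    using diff_chain_at[of "\<lambda>s. a + s *\<^sub>R d"] by (simp add: o_def)
  moreover have "(\<lambda>s. ?U' (s *\<^sub>R d)) = (*) (?U' d)"
    using linear_scale[OF has_derivative_linear[OF \<open>(U has_derivative ?U') _\<close>]] by auto
  ultimately show ?thesis by (simp add: has_field_derivative_def)
qed

text \<open>By the mean value theorem the mixed second difference is \<open>h\<close> times a difference of
  values of the \<open>j\<close>-th partial derivative, which the derivative of \<open>grad U\<close> at \<open>\<sigma>\<close> controls.\<close>
lemma second_difference_tendsto:
  fixes U :: "real^'n \<Rightarrow> real" and H :: "real^'n^'n"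
  assumes diff: "\<And>x. U differentiable (at x)"
    and D: "(grad U has_derivative (\<lambda>p. H *v p)) (at \<sigma>)"
  shows "((\<lambda>h. (U (\<sigma> + h *\<^sub>R axis i 1 + h *\<^sub>R axis j 1) - U (\<sigma> + h *\<^sub>R axis j 1)
              - U (\<sigma> + h *\<^sub>R axis i 1) + U \<sigma>) / h^2) \<longlongrightarrow> H$j$i) (at_right 0)"
proof (rule tendstoI)
  fix \<epsilon> :: real assume "\<epsilon> > 0"
  let ?ei = "axis i 1 :: real^'n" and ?ej = "axis j 1 :: real^'n"
  define r where "r y = grad U y $ j - grad U \<sigma> $ j - (H *v (y - \<sigma>)) $ j" for y
  obtain d where "d > 0" and d: "\<And>y. norm (y - \<sigma>) < d \<Longrightarrow>
      norm (grad U y - grad U \<sigma> - H *v (y - \<sigma>)) \<le> \<epsilon> / 4 * norm (y - \<sigma>)"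
    using D \<open>\<epsilon> > 0\<close> unfolding has_derivative_at_alt by (metis divide_pos_pos zero_less_numeral)
  have r: "\<bar>r y\<bar> \<le> \<epsilon> / 4 * b" if "norm (y - \<sigma>) \<le> b" "b < d" for y b
  proof -
    have "\<bar>r y\<bar> \<le> \<epsilon> / 4 * norm (y - \<sigma>)"
      using d[of y] that component_le_norm_cart[of "grad U y - grad U \<sigma> - H *v (y - \<sigma>)" j]
      by (simp add: r_def)
    also have "\<dots> \<le> \<epsilon> / 4 * b" using that \<open>\<epsilon> > 0\<close> by simp
    finally show ?thesis .
  qed
  have "dist ((U (\<sigma> + h *\<^sub>R ?ei + h *\<^sub>R ?ej) - U (\<sigma> + h *\<^sub>R ?ej) - U (\<sigma> + h *\<^sub>R ?ei) + U \<sigma>) / h^2)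
      (H$j$i) < \<epsilon>" if h: "0 < h" "h < d / 2" for h
  proof -
    define \<phi> where "\<phi> t = U (\<sigma> + h *\<^sub>R ?ei + t *\<^sub>R ?ej) - U (\<sigma> + t *\<^sub>R ?ej)" for t
    define \<phi>' where "\<phi>' t = grad U (\<sigma> + h *\<^sub>R ?ei + t *\<^sub>R ?ej) $ j - grad U (\<sigma> + t *\<^sub>R ?ej) $ j"
      for t
    have "(\<phi> has_real_derivative \<phi>' t) (at t)" for t
      unfolding \<phi>_def \<phi>'_def grad_nth by (intro derivative_intros has_real_derivative_along_line diff)
    then obtain \<xi> where "0 < \<xi>" "\<xi> < h" and mvt: "\<phi> h - \<phi> 0 = h * \<phi>' \<xi>"
      using MVT2[of 0 h \<phi> \<phi>'] h by auto
    define y1 where "y1 = \<sigma> + h *\<^sub>R ?ei + \<xi> *\<^sub>R ?ej"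
    define y2 where "y2 = \<sigma> + \<xi> *\<^sub>R ?ej"
    have "norm (y1 - \<sigma>) \<le> 2 * h"
      using norm_triangle_ineq[of "h *\<^sub>R ?ei" "\<xi> *\<^sub>R ?ej"] h \<open>\<xi> < h\<close> \<open>0 < \<xi>\<close>
      by (simp add: y1_def)
    then have r1: "\<bar>r y1\<bar> \<le> \<epsilon> / 4 * (2 * h)" using h by (intro r) auto
    have "norm (y2 - \<sigma>) \<le> h" using \<open>0 < \<xi>\<close> \<open>\<xi> < h\<close> by (simp add: y2_def)
    then have r2: "\<bar>r y2\<bar> \<le> \<epsilon> / 4 * h" using h by (intro r) auto
    have "(H *v (y1 - \<sigma>)) $ j - (H *v (y2 - \<sigma>)) $ j = (H *v (h *\<^sub>R ?ei)) $ j"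
      by (simp add: y1_def y2_def matrix_vector_right_distrib)
    also have "\<dots> = h * H$j$i"
      by (simp add: matrix_vector_mult_scaleR matrix_vector_mult_basis column_def)
    finally have mvt_expansion: "\<phi> h - \<phi> 0 = h^2 * H$j$i + h * (r y1 - r y2)"
      unfolding mvt by (simp add: \<phi>'_def r_def y1_def y2_def power2_eq_square algebra_simps)
    have "(\<phi> h - \<phi> 0) / h^2 - H$j$i = (r y1 - r y2) / h"
      unfolding mvt_expansion using h by (simp add: field_simps power2_eq_square)
    then have "dist ((\<phi> h - \<phi> 0) / h^2) (H$j$i) = \<bar>r y1 - r y2\<bar> / h"
      using h by (simp add: dist_real_def)
    also have "\<dots> \<le> 3 * \<epsilon> / 4"
      using r1 r2 h abs_triangle_ineq4[of "r y1" "r y2"] by (simp add: pos_divide_le_eq)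
    also have "\<dots> < \<epsilon>" using \<open>\<epsilon> > 0\<close> by simp
    also have "\<phi> h - \<phi> 0 = U (\<sigma> + h *\<^sub>R ?ei + h *\<^sub>R ?ej) - U (\<sigma> + h *\<^sub>R ?ej)
        - U (\<sigma> + h *\<^sub>R ?ei) + U \<sigma>"
      by (simp add: \<phi>_def)
    finally show ?thesis .
  qed
  then show "\<forall>\<^sub>F h in at_right 0. dist ((U (\<sigma> + h *\<^sub>R ?ei + h *\<^sub>R ?ej) - U (\<sigma> + h *\<^sub>R ?ej)
      - U (\<sigma> + h *\<^sub>R ?ei) + U \<sigma>) / h^2) (H$j$i) < \<epsilon>"
    unfolding eventually_at_right_field using \<open>d > 0\<close> by (intro exI[of _ "d / 2"]) auto
qed

lemma hessian_symmetric:
  fixes U :: "real^'n \<Rightarrow> real" and H :: "real^'n^'n"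
  assumes diff: "\<And>x. U differentiable (at x)"
    and D: "(grad U has_derivative (\<lambda>p. H *v p)) (at \<sigma>)"
  shows "transpose H = H"
proof -
  have "H$j$i = H$i$j" for i j
  proof (rule tendsto_unique[OF trivial_limit_at_right_real])
    show "((\<lambda>h. (U (\<sigma> + h *\<^sub>R axis i 1 + h *\<^sub>R axis j 1) - U (\<sigma> + h *\<^sub>R axis j 1)
        - U (\<sigma> + h *\<^sub>R axis i 1) + U \<sigma>) / h^2) \<longlongrightarrow> H$j$i) (at_right 0)"
      by (rule second_difference_tendsto[OF diff D])
    have "((\<lambda>h. (U (\<sigma> + h *\<^sub>R axis j 1 + h *\<^sub>R axis i 1) - U (\<sigma> + h *\<^sub>R axis i 1)
        - U (\<sigma> + h *\<^sub>R axis j 1) + U \<sigma>) / h^2) \<longlongrightarrow> H$i$j) (at_right 0)"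
      by (rule second_difference_tendsto[OF diff D])
    then show "((\<lambda>h. (U (\<sigma> + h *\<^sub>R axis i 1 + h *\<^sub>R axis j 1) - U (\<sigma> + h *\<^sub>R axis j 1)
        - U (\<sigma> + h *\<^sub>R axis i 1) + U \<sigma>) / h^2) \<longlongrightarrow> H$i$j) (at_right 0)"
      by (simp add: algebra_simps)
  qed
  then show ?thesis by (simp add: vec_eq_iff transpose_def)
qed

lemma has_vector_derivative_along_line:
  fixes f :: "real^'n \<Rightarrow> real^'m"
  assumes "(f has_derivative (\<lambda>p. A *v p)) (at \<sigma>)"
  shows "((\<lambda>t. f (\<sigma> + t *\<^sub>R d)) has_vector_derivative A *v d) (at 0)"
proof -
  have "((\<lambda>t. \<sigma> + t *\<^sub>R d) has_derivative (\<lambda>t. t *\<^sub>R d)) (at 0)"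
    by (auto intro!: derivative_eq_intros)
  moreover have "(f has_derivative (\<lambda>p. A *v p)) (at (\<sigma> + 0 *\<^sub>R d))" using assms by simp
  ultimately have "((\<lambda>t. f (\<sigma> + t *\<^sub>R d)) has_derivative (\<lambda>t. A *v (t *\<^sub>R d))) (at 0)"
    by (rule diff_chain_at[unfolded o_def])
  then show ?thesis by (simp add: has_vector_derivative_def matrix_vector_mult_scaleR)
qed

lemma difference_quotient_tendsto:
  fixes G :: "real \<Rightarrow> 'a::real_normed_vector"
  assumes "(G has_vector_derivative D) (at 0)" "G 0 = 0"
  shows "((\<lambda>t. G t /\<^sub>R t) \<longlongrightarrow> D) (at 0)"
proof -
  have "((\<lambda>t. norm (G t - G 0 - t *\<^sub>R D) / norm (t - 0)) \<longlongrightarrow> 0) (at 0)"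
    using assms(1) unfolding has_vector_derivative_def has_derivative_iff_norm by simp
  moreover have "\<forall>\<^sub>F t in at 0. norm (G t - G 0 - t *\<^sub>R D) / norm (t - 0) = norm (G t /\<^sub>R t - D)"
  proof (rule eventually_at_filter[THEN iffD2, OF always_eventually], intro allI impI)
    fix t :: real assume "t \<noteq> 0"
    then have "G t /\<^sub>R t - D = (G t - t *\<^sub>R D) /\<^sub>R t" by (simp add: algebra_simps)
    then show "norm (G t - G 0 - t *\<^sub>R D) / norm (t - 0) = norm (G t /\<^sub>R t - D)"
      using assms(2) by (simp add: divide_inverse_commute)
  qed
  ultimately have "((\<lambda>t. norm (G t /\<^sub>R t - D)) \<longlongrightarrow> 0) (at 0)"
    by (rule Lim_transform_eventually)
  then show ?thesis by (simp add: tendsto_norm_zero_iff LIM_zero_iff)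
qed

text \<open>Along the line \<open>\<sigma> + t d\<close>, first \<open>(g/t) \<bullet> f = 0\<close> forces \<open>f \<sigma> = 0\<close> (as \<open>A\<close> is onto),
  and then \<open>(g/t) \<bullet> (f/t) = 0\<close> tends to \<open>(A d) \<bullet> (B d)\<close>.\<close>
lemma derivatives_orthogonal_at_zero:
  fixes g f :: "real^'n \<Rightarrow> real^'n" and A B :: "real^'n^'n"
  assumes orth: "\<And>x. g x \<bullet> f x = 0" and "g \<sigma> = 0"
    and Dg: "(g has_derivative (\<lambda>p. A *v p)) (at \<sigma>)"
    and Df: "(f has_derivative (\<lambda>p. B *v p)) (at \<sigma>)"
    and "det A \<noteq> 0"
  shows "(A *v d) \<bullet> (B *v d) = 0"
proof -
  have lim_g: "((\<lambda>t. g (\<sigma> + t *\<^sub>R d) /\<^sub>R t) \<longlongrightarrow> A *v d) (at 0)" for d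
    using difference_quotient_tendsto[OF has_vector_derivative_along_line[OF Dg]] \<open>g \<sigma> = 0\<close>
    by simp
  have "(A *v d) \<bullet> f \<sigma> = 0" for d
  proof -
    have "continuous (at 0) (\<lambda>t. f (\<sigma> + t *\<^sub>R d))"
      by (rule has_vector_derivative_continuous[OF has_vector_derivative_along_line[OF Df]])
    then have "((\<lambda>t. f (\<sigma> + t *\<^sub>R d)) \<longlongrightarrow> f \<sigma>) (at 0)"
      by (simp add: continuous_at)
    with lim_g have "((\<lambda>t. (g (\<sigma> + t *\<^sub>R d) /\<^sub>R t) \<bullet> f (\<sigma> + t *\<^sub>R d))
        \<longlongrightarrow> (A *v d) \<bullet> f \<sigma>) (at 0)"
      by (rule tendsto_inner)
    then show ?thesis using orth by (auto dest: LIM_const_eq)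
  qed
  from this[of "matrix_inv A *v f \<sigma>"] have "f \<sigma> \<bullet> f \<sigma> = 0"
    by (simp add: matrix_inv_mult_vector(1)[OF \<open>det A \<noteq> 0\<close>])
  then have "((\<lambda>t. f (\<sigma> + t *\<^sub>R d) /\<^sub>R t) \<longlongrightarrow> B *v d) (at 0)"
    using difference_quotient_tendsto[OF has_vector_derivative_along_line[OF Df]] by simp
  with lim_g[of d] have "((\<lambda>t. (g (\<sigma> + t *\<^sub>R d) /\<^sub>R t) \<bullet> (f (\<sigma> + t *\<^sub>R d) /\<^sub>R t))
      \<longlongrightarrow> (A *v d) \<bullet> (B *v d)) (at 0)"
    by (rule tendsto_inner)
  then show ?thesis using orth by (auto dest: LIM_const_eq)
qed

section \<open>The linearisation at the saddle\<close>

locale saddle_linearization =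
  fixes H L :: "real^'n^'n" and v :: "real^'n" and \<mu> :: real
  assumes symmetric: "transpose H = H"
    and nondegenerate: "det H \<noteq> 0"
    and index_one: "num_neg_eigenvalues H = 1"
    and mu_pos: "\<mu> > 0"
    and orthogonal_images: "\<And>d. (H *v d) \<bullet> (L *v d) = 0"
    and eigenvector: "(H - transpose L) *v v = (- \<mu>) *\<^sub>R v"
    and unit: "norm v = 1"
begin

definition w :: "real^'n" where "w = matrix_inv H *v v"

lemma H_mult_w: "H *v w = v"
  unfolding w_def by (rule matrix_inv_mult_vector(1)[OF nondegenerate])

lemma w_nonzero: "w \<noteq> 0"
  using H_mult_w unit by auto

lemma inner_v_w: "v \<bullet> w = - 1 / \<mu>"
proof -
  have "w \<bullet> (H *v v) = v \<bullet> v"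
    using inner_matrix_symmetric[OF symmetric, of w v] by (simp add: H_mult_w)
  also have "\<dots> = 1" using unit by (simp add: dot_square_norm)
  finally have "w \<bullet> (H *v v) = 1" .
  moreover have "w \<bullet> (transpose L *v v) = (H *v w) \<bullet> (L *v w)"
    by (metis H_mult_w dot_lmul_matrix inner_commute transpose_matrix_vector)
  moreover have "w \<bullet> (H *v v) - w \<bullet> (transpose L *v v) = - \<mu> * (v \<bullet> w)"
    using arg_cong[OF eigenvector, of "inner w"]
    by (simp add: matrix_vector_mult_diff_rdistrib inner_diff_right inner_commute)
  ultimately show ?thesis using orthogonal_images[of w] mu_pos by (simp add: field_simps)
qed

lemma quadratic_form_w: "w \<bullet> (H *v w) = - 1 / \<mu>"
  using inner_v_w by (simp add: H_mult_w inner_commute)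

text \<open>Completing the square: the shift \<open>x \<mapsto> x + \<mu> (v \<bullet> x) w\<close> absorbs the rank-one term
  and moves \<open>x\<close> into the \<open>H\<close>-orthogonal complement of \<open>w\<close>.\<close>
lemma shift_orthogonal_w: "(x + (\<mu> * (v \<bullet> x)) *\<^sub>R w) \<bullet> (H *v w) = 0"
  using inner_v_w mu_pos by (simp add: H_mult_w inner_commute[of _ v] inner_add_right)

lemma shift_quadratic_form:
  "x \<bullet> (H *v x) + \<mu> * (v \<bullet> x)^2 = (x + (\<mu> * (v \<bullet> x)) *\<^sub>R w) \<bullet> (H *v (x + (\<mu> * (v \<bullet> x)) *\<^sub>R w))"
proof -
  have "w \<bullet> (H *v x) = v \<bullet> x"
    using inner_matrix_symmetric[OF symmetric, of w x] by (simp add: H_mult_w inner_commute)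
  then show ?thesis
    unfolding quadratic_form_add[OF symmetric] quadratic_form_scale quadratic_form_w
    using mu_pos by (simp add: power2_eq_square field_simps)
qed

lemma quadratic_form_pos_if_orthogonal_w:
  assumes "y \<noteq> 0" "y \<bullet> (H *v w) = 0"
  shows "y \<bullet> (H *v y) > 0"
proof (rule quadratic_form_pos_on_orthogonal_of_negative[OF symmetric nondegenerate index_one _ assms])
  show "w \<bullet> (H *v w) < 0" using quadratic_form_w mu_pos by simp
qed

lemma add_outer_nonneg: "0 \<le> x \<bullet> ((H + \<mu> *\<^sub>R outer v v) *v x)"
proof -
  define y where "y = x + (\<mu> * (v \<bullet> x)) *\<^sub>R w"
  have "x \<bullet> ((H + \<mu> *\<^sub>R outer v v) *v x) = y \<bullet> (H *v y)"
    unfolding quadratic_form_add_outer shift_quadratic_form y_def ..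
  moreover have "y \<bullet> (H *v y) > 0" if "y \<noteq> 0"
    using quadratic_form_pos_if_orthogonal_w[OF that] shift_orthogonal_w by (simp add: y_def)
  ultimately show ?thesis by (cases "y = 0") auto
qed

lemma add_double_outer_pos:
  assumes "x \<noteq> 0"
  shows "0 < x \<bullet> ((H + (2 * \<mu>) *\<^sub>R outer v v) *v x)"
proof (cases "v \<bullet> x = 0")
  case True
  then have "0 < x \<bullet> (H *v x)"
    using quadratic_form_pos_if_orthogonal_w[OF assms] shift_orthogonal_w[of x] by simp
  then show ?thesis using True by (simp add: quadratic_form_add_outer)
next
  case False
  then have "0 < \<mu> * (v \<bullet> x)^2" using mu_pos by simp
  then show ?thesis
    using add_outer_nonneg[of x] by (simp add: quadratic_form_add_outer)
qed

lemma kernel_add_outer: "{x. (H + \<mu> *\<^sub>R outer v v) *v x = 0} = span {w}"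
proof (intro set_eqI iffI)
  fix x assume "x \<in> {x. (H + \<mu> *\<^sub>R outer v v) *v x = 0}"
  define a where "a = - \<mu> * (v \<bullet> x)"
  have "H *v x = a *\<^sub>R v"
    using \<open>x \<in> _\<close> unfolding a_def
    by (simp add: matrix_vector_mult_add_rdistrib outer_mult_vector eq_neg_iff_add_eq_0
        flip: scaleR_matrix_vector_assoc)
  also have "\<dots> = H *v (a *\<^sub>R w)"
    by (simp add: H_mult_w matrix_vector_mult_scaleR)
  finally have "matrix_inv H *v (H *v x) = matrix_inv H *v (H *v (a *\<^sub>R w))" by simp
  then have "x = a *\<^sub>R w" by (simp only: matrix_inv_mult_vector(2)[OF nondegenerate])
  then show "x \<in> span {w}" by (metis span_singleton rangeI)
next
  fix x assume "x \<in> span {w}"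
  then obtain k where "x = k *\<^sub>R w" by (auto simp: span_singleton)
  then show "x \<in> {x. (H + \<mu> *\<^sub>R outer v v) *v x = 0}"
    using inner_v_w mu_pos
    by (simp add: matrix_vector_mult_add_rdistrib outer_mult_vector H_mult_w
        matrix_vector_mult_scaleR inner_commute flip: scaleR_matrix_vector_assoc)
qed

lemma dim_kernel_add_outer: "dim {x. (H + \<mu> *\<^sub>R outer v v) *v x = 0} = 1"
  unfolding kernel_add_outer using w_nonzero by simp

lemma det_add_outer_eq_0: "det (H + \<mu> *\<^sub>R outer v v) = 0"
proof (rule ccontr)
  assume "det (H + \<mu> *\<^sub>R outer v v) \<noteq> 0"
  moreover have "(H + \<mu> *\<^sub>R outer v v) *v w = 0"
    using kernel_add_outer span_base[of w "{w}"] by blast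
  ultimately show False using det_nonzero_kernel_zero w_nonzero by blast
qed

lemma det_add_double_outer: "det (H + (2 * \<mu>) *\<^sub>R outer v v) = - det H"
proof -
  obtain K where K: "\<And>c. det (H + c *\<^sub>R outer v v) = det H + c * K"
    using det_add_outer_affine[of H v] by auto
  show ?thesis using K[of \<mu>] K[of "2 * \<mu>"] det_add_outer_eq_0 by simp
qed

lemma add_outer_symmetric: "transpose (H + c *\<^sub>R outer v v) = H + c *\<^sub>R outer v v"
  by (simp add: transpose_add transpose_scalar transpose_outer symmetric)

end

theorem lemma8p2:
  fixes U :: "real^'n \<Rightarrow> real" and ell :: "real^'n \<Rightarrow> real^'n"
    and \<sigma> v :: "real^'n" and \<mu> :: real
  assumes "C3_fun U" and "morse U"
    and "C1_fun ell" and "\<And>x. grad U x \<bullet> ell x = 0"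
    and "grad U \<sigma> = 0"
    and "num_neg_eigenvalues (hess U \<sigma>) = 1"
    and "\<mu> > 0"
    and "(hess U \<sigma> - transpose (jacobian ell (at \<sigma>))) *v v = (- \<mu>) *\<^sub>R v"
    and "norm v = 1"
  shows "transpose (hess U \<sigma> + (2 * \<mu>) *\<^sub>R outer v v) = hess U \<sigma> + (2 * \<mu>) *\<^sub>R outer v v
       \<and> (\<forall>x. x \<noteq> 0 \<longrightarrow> x \<bullet> ((hess U \<sigma> + (2 * \<mu>) *\<^sub>R outer v v) *v x) > 0)
       \<and> det (hess U \<sigma> + (2 * \<mu>) *\<^sub>R outer v v) = - det (hess U \<sigma>)
       \<and> transpose (hess U \<sigma> + \<mu> *\<^sub>R outer v v) = hess U \<sigma> + \<mu> *\<^sub>R outer v v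
       \<and> (\<forall>x. x \<bullet> ((hess U \<sigma> + \<mu> *\<^sub>R outer v v) *v x) \<ge> 0)
       \<and> det (hess U \<sigma> + \<mu> *\<^sub>R outer v v) = 0
       \<and> {x. (hess U \<sigma> + \<mu> *\<^sub>R outer v v) *v x = 0} = span {matrix_inv (hess U \<sigma>) *v v}
       \<and> dim {x. (hess U \<sigma> + \<mu> *\<^sub>R outer v v) *v x = 0} = 1"
proof -
  have "\<And>x. U differentiable (at x)" "grad U differentiable (at \<sigma>)" "ell differentiable (at \<sigma>)"
    using assms(1,3) unfolding C3_fun_def C1_fun_def by auto
  then have "(grad U has_derivative (\<lambda>p. hess U \<sigma> *v p)) (at \<sigma>)"
    and "(ell has_derivative (\<lambda>p. jacobian ell (at \<sigma>) *v p)) (at \<sigma>)"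
    and "transpose (hess U \<sigma>) = hess U \<sigma>"
    by (auto simp: hess_def jacobian_works intro: hessian_symmetric)
  moreover have "det (hess U \<sigma>) \<noteq> 0" using assms(2,5) unfolding morse_def by blast
  ultimately interpret saddle_linearization "hess U \<sigma>" "jacobian ell (at \<sigma>)" v \<mu>
    using assms(4-9) by unfold_locales (auto intro: derivatives_orthogonal_at_zero)
  show ?thesis
    using add_outer_symmetric add_double_outer_pos det_add_double_outer add_outer_nonneg
      det_add_outer_eq_0 kernel_add_outer dim_kernel_add_outer
    unfolding w_def by blast
qed

end
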